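(* Let $\mathfrak{n}$ be the real 3-dimensional Heisenberg Lie algebra with basis $(x_1,x_2,x_3)$ and only nonzero bracket $[x_1,x_2]=x_3$. (i) Any linear map $J:\mathfrak{n}\to\mathfrak{n}$ which has zero torsion and is an extension of a rank 1 CR-structure $(\mathfrak{p},J_\mathfrak{p})$ on $\mathfrak{n}$ with $\mathfrak{p}$ nonabelian is equivalent to a unique endomorphism with matrix (in the basis $(x_1,x_2,x_3)$) $\begin{pmatrix}0&-1&0\\1&0&0\\0&0&c\end{pmatrix}$, $c\in\mathbb{R}$. (ii) Any linear map $J:\mathfrak{n}\to\mathfrak{n}$ which is an extension of a rank 1 CR-structure $(\mathfrak{p},J_\mathfrak{p})$ on $\mathfrak{n}$ with $\mathfrak{p}$ abelian is equivalent to a unique endomorphism with matrix (in the basis $(x_1,x_2,x_3)$) $\begin{pmatrix}t&0&0\\0&0&1\\0&-1&0\end{pmatrix}$, $t\in\mathbb{R}$; and such a $J$ has nonzero torsion.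
   Context: A rank 1 CR-structure on a real Lie algebra $\mathfrak{g}$ is a pair $(\mathfrak{p},J_\mathfrak{p})$ where $\mathfrak{p}$ is a 2-dimensional vector subspace of $\mathfrak{g}$ and $J_\mathfrak{p}:\mathfrak{p}\to\mathfrak{p}$ is linear with (a) $J_\mathfrak{p}^2=-1$, (b) $[X,Y]-[J_\mathfrak{p}X,J_\mathfrak{p}Y]\in\mathfrak{p}$ for all $X,Y\in\mathfrak{p}$, (c) $[J_\mathfrak{p}X,J_\mathfrak{p}Y]-[X,Y]-J_\mathfrak{p}[J_\mathfrak{p}X,Y]-J_\mathfrak{p}[X,J_\mathfrak{p}Y]=0$ for all $X,Y\in\mathfrak{p}$. A linear map $J:\mathfrak{g}\to\mathfrak{g}$ is an extension of it if $J|_\mathfrak{p}=J_\mathfrak{p}$. $\mathfrak{p}$ is abelian if $[X,Y]=0$ for all $X,Y\in\mathfrak{p}$. A linear map $J$ has zero torsion if $[JX,JY]-[X,Y]-J[JX,Y]-J[X,JY]=0$ for all $X,Y\in\mathfrak{g}$. Two linear maps $J,J'$ are equivalent if $J'=\Phi\circ J\circ\Phi^{-1}$ for some Lie algebra automorphism $\Phi$. The matrix of a linear map in a basis $(e_j)$ is $(\xi^i_j)$ with $Je_j=\sum_i\xi^i_je_i$. *)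

theory Defs
  imports "HOL-Analysis.Analysis"
begin

text \<open>The real 3-dimensional Heisenberg Lie algebra, modelled on real^3 with
  standard basis x1 = axis 1 1, x2 = axis 2 1, x3 = axis 3 1 and bracket
  determined by [x1,x2] = x3 (all other brackets of basis vectors zero).\<close>

definition hbr :: "real^3 \<Rightarrow> real^3 \<Rightarrow> real^3" where
  "hbr x y = vector [0, 0, x$1 * y$2 - x$2 * y$1]"

definition heis_aut :: "(real^3 \<Rightarrow> real^3) \<Rightarrow> bool" where
  "heis_aut \<Phi> \<longleftrightarrow> linear \<Phi> \<and> bij \<Phi> \<and> (\<forall>x y. \<Phi> (hbr x y) = hbr (\<Phi> x) (\<Phi> y))"

definition equivalent :: "(real^3 \<Rightarrow> real^3) \<Rightarrow> (real^3 \<Rightarrow> real^3) \<Rightarrow> bool" where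
  "equivalent J J' \<longleftrightarrow> (\<exists>\<Phi>. heis_aut \<Phi> \<and> J' = \<Phi> \<circ> J \<circ> inv \<Phi>)"

text \<open>Rank 1 CR-structure (p, Jp): Jp is a map p -> p (only its values on p matter).\<close>
definition CR1 :: "(real^3) set \<Rightarrow> (real^3 \<Rightarrow> real^3) \<Rightarrow> bool" where
  "CR1 p Jp \<longleftrightarrow> subspace p \<and> dim p = 2
     \<and> (\<forall>X\<in>p. Jp X \<in> p)
     \<and> (\<forall>X\<in>p. \<forall>Y\<in>p. Jp (X + Y) = Jp X + Jp Y)
     \<and> (\<forall>X\<in>p. \<forall>a::real. Jp (a *\<^sub>R X) = a *\<^sub>R Jp X)
     \<and> (\<forall>X\<in>p. Jp (Jp X) = - X)
     \<and> (\<forall>X\<in>p. \<forall>Y\<in>p. hbr X Y - hbr (Jp X) (Jp Y) \<in> p)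
     \<and> (\<forall>X\<in>p. \<forall>Y\<in>p. hbr (Jp X) (Jp Y) - hbr X Y - Jp (hbr (Jp X) Y) - Jp (hbr X (Jp Y)) = 0)"

definition extends_CR :: "(real^3 \<Rightarrow> real^3) \<Rightarrow> (real^3) set \<Rightarrow> (real^3 \<Rightarrow> real^3) \<Rightarrow> bool" where
  "extends_CR J p Jp \<longleftrightarrow> (\<forall>X\<in>p. J X = Jp X)"

definition abelian_sub :: "(real^3) set \<Rightarrow> bool" where
  "abelian_sub p \<longleftrightarrow> (\<forall>X\<in>p. \<forall>Y\<in>p. hbr X Y = 0)"

definition zero_torsion :: "(real^3 \<Rightarrow> real^3) \<Rightarrow> bool" where
  "zero_torsion J \<longleftrightarrow> (\<forall>X Y. hbr (J X) (J Y) - hbr X Y - J (hbr (J X) Y) - J (hbr X (J Y)) = 0)"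

text \<open>Matrices given by rows; the endomorphism is v \<mapsto> M *v v, so
  column j of M is the coordinate vector of J(x_j).\<close>
definition M1 :: "real \<Rightarrow> real^3^3" where
  "M1 c = vector [vector [0, -1, 0], vector [1, 0, 0], vector [0, 0, c]]"

definition M2 :: "real \<Rightarrow> real^3^3" where
  "M2 t = vector [vector [t, 0, 0], vector [0, 0, 1], vector [0, -1, 0]]"

end

theory Submission
  imports Defs
begin

text \<open>Write the bracket as [x,y] = \<omega>(x,y) x3 with \<omega>(x,y) = x1 y2 - x2 y1. Whenever
  \<omega>(a,b) \<noteq> 0, the linear map sending x1, x2, x3 to a, b, [a,b] is an automorphism, so a
  normal form is reached by choosing such a frame adapted to J. A CR-structure is
  p = span {u, J u} with J\<circ>J = -1 on p.
  If p is nonabelian then \<omega>(u, J u) \<noteq> 0, and zero torsion evaluated against the central x3 (e3 below)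
  forces J x3 = c x3; the frame (u, J u) yields the first matrix.
  If p is abelian it contains the centre, so f = J x3 lies in p and has a nonzero horizontal part;
  this alone makes the torsion on x3 and a horizontal vector g with \<omega>(f,g) > 0 nonzero.
  Correcting g by an element of p gives an eigenvector v of J, and the frame (v / \<omega>(v,f), f)
  yields the second matrix.
  Uniqueness: c, resp. t, is the only real eigenvalue of the normal form, and real eigenvalues are
  invariant under equivalence.\<close>

definition e3 :: "real^3" where "e3 = vector [0, 0, 1]"

definition heis_form :: "real^3 \<Rightarrow> real^3 \<Rightarrow> real" where
  "heis_form x y = x$1 * y$2 - x$2 * y$1"

lemma vec3_eq_iff: "(x::real^3) = y \<longleftrightarrow> x$1 = y$1 \<and> x$2 = y$2 \<and> x$3 = y$3"
  by (simp add: vec_eq_iff forall_3)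

lemma e3_nth [simp]: "e3$1 = 0" "e3$2 = 0" "e3$3 = 1"
  by (simp_all add: e3_def)

lemma e3_nonzero [simp]: "e3 \<noteq> 0"
  by (simp add: vec3_eq_iff)

lemma hbr_eq: "hbr x y = heis_form x y *\<^sub>R e3"
  by (simp add: hbr_def heis_form_def vec3_eq_iff)

lemma heis_form_e3 [simp]: "heis_form e3 y = 0" "heis_form y e3 = 0"
  by (simp_all add: heis_form_def)

lemma heis_form_self [simp]: "heis_form x x = 0"
  by (simp add: heis_form_def)

lemma heis_form_add_left [simp]: "heis_form (x + y) z = heis_form x z + heis_form y z"
  by (simp add: heis_form_def algebra_simps)

lemma heis_form_scaleR_left [simp]: "heis_form (c *\<^sub>R x) y = c * heis_form x y"
  by (simp add: heis_form_def algebra_simps)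

lemma heis_form_nondegenerate:
  assumes "heis_form a b \<noteq> 0" "heis_form z a = 0" "heis_form z b = 0"
  shows "z$1 = 0 \<and> z$2 = 0"
proof -
  have "z$1 * heis_form a b = a$1 * heis_form z b - b$1 * heis_form z a"
       "z$2 * heis_form a b = a$2 * heis_form z b - b$2 * heis_form z a"
    by (simp_all add: heis_form_def algebra_simps)
  with assms show ?thesis by simp
qed

lemma M1_mult: "M1 c *v v = vector [- v$2, v$1, c * v$3]"
  by (simp add: M1_def matrix_vector_mult_def vec3_eq_iff sum_3)

lemma M2_mult: "M2 t *v v = vector [t * v$1, v$3, - v$2]"
  by (simp add: M2_def matrix_vector_mult_def vec3_eq_iff sum_3)

lemma complex_structure_independent:
  fixes J :: "'a::real_vector \<Rightarrow> 'a"
  assumes "linear J" "J (J u) = - u" "u \<noteq> 0" "a *\<^sub>R u + b *\<^sub>R J u = 0"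
  shows "a = 0 \<and> b = 0"
proof -
  have "a *\<^sub>R J u - b *\<^sub>R u = J (a *\<^sub>R u + b *\<^sub>R J u)"
    using assms(1,2) by (simp add: linear_add linear_scale)
  then have "a *\<^sub>R J u - b *\<^sub>R u = 0"
    using assms(1,4) by (simp add: linear_0)
  moreover have "(a*a + b*b) *\<^sub>R u = a *\<^sub>R (a *\<^sub>R u + b *\<^sub>R J u) - b *\<^sub>R (a *\<^sub>R J u - b *\<^sub>R u)"
    by (simp add: algebra_simps)
  ultimately have "a*a + b*b = 0"
    using assms(3,4) by simp
  then show ?thesis
    by simp
qed

lemma complex_structure_eigenvector:
  fixes J :: "'a::real_vector \<Rightarrow> 'a"
  assumes "linear J" "J a = b" "J b = - a" "J g = \<alpha> *\<^sub>R g + \<beta> *\<^sub>R b + \<delta> *\<^sub>R a"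
  shows "\<exists>c1 c2. J (g + c1 *\<^sub>R a + c2 *\<^sub>R b) = \<alpha> *\<^sub>R (g + c1 *\<^sub>R a + c2 *\<^sub>R b)"
proof -
  define D where "D = 1 + \<alpha> * \<alpha>"
  have "D > 0"
    unfolding D_def by (simp add: add_pos_nonneg)
  define c1 where "c1 = (\<alpha> * \<delta> - \<beta>) / D"
  define c2 where "c2 = (\<delta> + \<alpha> * \<beta>) / D"
  have "\<beta> + c1 = \<alpha> * c2" "\<delta> - c2 = \<alpha> * c1"
    using \<open>D > 0\<close> by (simp_all add: c1_def c2_def D_def field_simps)
  have "J (g + c1 *\<^sub>R a + c2 *\<^sub>R b) = \<alpha> *\<^sub>R g + (\<beta> + c1) *\<^sub>R b + (\<delta> - c2) *\<^sub>R a"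
    using assms by (simp add: linear_add linear_scale algebra_simps)
  also have "\<dots> = \<alpha> *\<^sub>R (g + c1 *\<^sub>R a + c2 *\<^sub>R b)"
    unfolding \<open>\<beta> + c1 = \<alpha> * c2\<close> \<open>\<delta> - c2 = \<alpha> * c1\<close> by (simp add: algebra_simps)
  finally show ?thesis by blast
qed

lemma heis_aut_inv:
  assumes "heis_aut \<Phi>"
  shows "heis_aut (inv \<Phi>)"
proof -
  have lin: "linear \<Phi>" and bij: "bij \<Phi>" and hom: "\<And>x y. \<Phi> (hbr x y) = hbr (\<Phi> x) (\<Phi> y)"
    using assms by (auto simp: heis_aut_def)
  have "inv \<Phi> (hbr x y) = hbr (inv \<Phi> x) (inv \<Phi> y)" for x y
    using bij hom by (metis bij_inv_eq_iff)
  moreover have "linear (inv \<Phi>)"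
    using lin bij by (simp add: bij_is_inj inj_linear_imp_inv_linear)
  ultimately show ?thesis
    using bij by (simp add: heis_aut_def bij_imp_bij_inv)
qed

lemma equivalentI:
  assumes "heis_aut \<Phi>" "\<And>x. J (\<Phi> x) = \<Phi> (M x)"
  shows "equivalent J M"
proof -
  have "bij \<Phi>"
    using assms(1) by (simp add: heis_aut_def)
  then have "inv \<Phi> \<circ> J \<circ> inv (inv \<Phi>) = M"
    using assms(2) by (simp add: inv_inv_eq bij_is_inj fun_eq_iff)
  then show ?thesis
    using heis_aut_inv[OF assms(1)] unfolding equivalent_def by metis
qed

lemma equivalent_eigenvalue_iff:
  assumes "equivalent J M"
  shows "(\<exists>y. y \<noteq> 0 \<and> M y = t *\<^sub>R y) \<longleftrightarrow> (\<exists>y. y \<noteq> 0 \<and> J y = t *\<^sub>R y)"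
proof -
  obtain \<Phi> where "heis_aut \<Phi>" and M: "M = \<Phi> \<circ> J \<circ> inv \<Phi>"
    using assms by (auto simp: equivalent_def)
  then have lin: "linear \<Phi>" and bij: "bij \<Phi>"
    by (auto simp: heis_aut_def)
  have "M (\<Phi> y) = t *\<^sub>R \<Phi> y \<longleftrightarrow> J y = t *\<^sub>R y" for y
    using lin bij by (simp add: M bij_is_inj inj_eq flip: linear_scale)
  moreover have "\<Phi> y = 0 \<longleftrightarrow> y = 0" for y
    using lin bij by (metis bij_is_inj inj_eq linear_0)
  ultimately show ?thesis
    using bij by (metis bij_pointE)
qed

definition heis_frame :: "real^3 \<Rightarrow> real^3 \<Rightarrow> real^3 \<Rightarrow> real^3" where
  "heis_frame a b x = x$1 *\<^sub>R a + x$2 *\<^sub>R b + x$3 *\<^sub>R hbr a b"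

lemma linear_heis_frame: "linear (heis_frame a b)"
  by (rule linearI) (simp_all add: heis_frame_def hbr_eq algebra_simps)

lemma heis_form_heis_frame:
  "heis_form (heis_frame a b x) (heis_frame a b y) = heis_form x y * heis_form a b"
  by (simp add: heis_frame_def hbr_eq heis_form_def algebra_simps)

lemma heis_aut_heis_frame:
  assumes "heis_form a b \<noteq> 0"
  shows "heis_aut (heis_frame a b)"
proof -
  have "x = 0" if "heis_frame a b x = 0" for x
  proof -
    have "heis_form (heis_frame a b x) b = x$1 * heis_form a b"
         "heis_form a (heis_frame a b x) = x$2 * heis_form a b"
      by (simp_all add: heis_frame_def hbr_eq heis_form_def algebra_simps)
    with that assms have "x$1 = 0" "x$2 = 0"
      by (simp_all add: heis_form_def)
    with that assms show "x = 0"
      by (simp add: heis_frame_def hbr_eq vec3_eq_iff)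
  qed
  then have "inj (heis_frame a b)"
    using linear_heis_frame by (simp add: linear_injective_0)
  then have "bij (heis_frame a b)"
    using linear_heis_frame by (simp add: bij_def linear_inj_imp_surj)
  moreover have "heis_frame a b (hbr x y) = hbr (heis_frame a b x) (heis_frame a b y)" for x y
  proof -
    have "heis_frame a b (hbr x y) = heis_form x y *\<^sub>R hbr a b"
      by (simp add: heis_frame_def hbr_eq)
    also have "\<dots> = hbr (heis_frame a b x) (heis_frame a b y)"
      by (simp only: hbr_eq heis_form_heis_frame scaleR_scaleR)
    finally show ?thesis .
  qed
  ultimately show ?thesis
    by (simp add: heis_aut_def linear_heis_frame)
qed

lemma M1_eigenvalue_iff: "(\<exists>z. z \<noteq> 0 \<and> M1 c *v z = t *\<^sub>R z) \<longleftrightarrow> t = c"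
proof
  assume "\<exists>z. z \<noteq> 0 \<and> M1 c *v z = t *\<^sub>R z"
  then obtain z :: "real^3" where "z \<noteq> 0" and "M1 c *v z = t *\<^sub>R z"
    by blast
  then have z: "- z$2 = t * z$1" "z$1 = t * z$2" "c * z$3 = t * z$3"
    by (simp_all add: M1_mult vec3_eq_iff)
  have "(1 + t * t) * z$1 = 0"
    using z(1,2) by algebra
  moreover have "1 + t * t > 0"
    by (simp add: add_pos_nonneg)
  ultimately have "z$1 = 0" "z$2 = 0"
    using z(1) by simp_all
  with \<open>z \<noteq> 0\<close> z(3) show "t = c"
    by (simp add: vec3_eq_iff)
next
  assume "t = c"
  then show "\<exists>z. z \<noteq> 0 \<and> M1 c *v z = t *\<^sub>R z"
    by (intro exI[of _ e3]) (simp add: M1_mult vec3_eq_iff)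
qed

lemma M2_eigenvalue_iff: "(\<exists>z. z \<noteq> 0 \<and> M2 s *v z = t *\<^sub>R z) \<longleftrightarrow> t = s"
proof
  assume "\<exists>z. z \<noteq> 0 \<and> M2 s *v z = t *\<^sub>R z"
  then obtain z :: "real^3" where "z \<noteq> 0" and "M2 s *v z = t *\<^sub>R z"
    by blast
  then have z: "s * z$1 = t * z$1" "z$3 = t * z$2" "- z$2 = t * z$3"
    by (simp_all add: M2_mult vec3_eq_iff)
  have "(1 + t * t) * z$2 = 0"
    using z(2,3) by algebra
  moreover have "1 + t * t > 0"
    by (simp add: add_pos_nonneg)
  ultimately have "z$2 = 0" "z$3 = 0"
    using z(2) by simp_all
  with \<open>z \<noteq> 0\<close> z(1) show "t = s"
    by (simp add: vec3_eq_iff)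
next
  assume "t = s"
  then show "\<exists>z. z \<noteq> 0 \<and> M2 s *v z = t *\<^sub>R z"
    by (intro exI[of _ "vector [1, 0, 0] :: real^3"]) (simp add: M2_mult vec3_eq_iff)
qed

lemma span_pair_eq:
  fixes u w :: "'a::real_vector"
  shows "span {u, w} = {a *\<^sub>R u + b *\<^sub>R w | a b. True}"
  by (auto simp: span_insert span_singleton algebra_simps)

lemma abelian_sub_span_pair_iff: "abelian_sub (span {u, w}) \<longleftrightarrow> heis_form u w = 0"
proof
  assume "abelian_sub (span {u, w})"
  then have "hbr u w = 0"
    by (simp add: abelian_sub_def span_base)
  then show "heis_form u w = 0"
    by (simp add: hbr_eq)
next
  assume "heis_form u w = 0"
  have "heis_form (a *\<^sub>R u + b *\<^sub>R w) (c *\<^sub>R u + d *\<^sub>R w) = (a * d - b * c) * heis_form u w"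
    for a b c d
    by (simp add: heis_form_def algebra_simps)
  with \<open>heis_form u w = 0\<close> show "abelian_sub (span {u, w})"
    by (auto simp: abelian_sub_def span_pair_eq hbr_eq)
qed

lemma e3_in_span_pair:
  assumes indep: "\<And>a b. a *\<^sub>R u + b *\<^sub>R w = 0 \<Longrightarrow> a = 0 \<and> b = 0"
    and "heis_form u w = 0"
  shows "e3 \<in> span {u, w}"
proof -
  define v1 where "v1 = (- w$1) *\<^sub>R u + u$1 *\<^sub>R w"
  define v2 where "v2 = (- w$2) *\<^sub>R u + u$2 *\<^sub>R w"
  have span: "u \<in> span {u, w}" "v1 \<in> span {u, w}" "v2 \<in> span {u, w}"
    unfolding v1_def v2_def by (simp_all add: span_base span_diff span_mul)
  have vertical: "v1$1 = 0" "v1$2 = 0" "v2$1 = 0" "v2$2 = 0"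
    using \<open>heis_form u w = 0\<close> by (simp_all add: v1_def v2_def heis_form_def algebra_simps)
  have "\<exists>v \<in> span {u, w}. v \<noteq> 0 \<and> v$1 = 0 \<and> v$2 = 0"
  proof (cases "v1 = 0 \<and> v2 = 0")
    case True
    have "u \<noteq> 0"
      using indep[of 1 0] by auto
    moreover have "u$1 = 0" "u$2 = 0"
      using True indep[of "- w$1" "u$1"] indep[of "- w$2" "u$2"] by (simp_all add: v1_def v2_def)
    ultimately show ?thesis
      using span by blast
  next
    case False
    then show ?thesis
      using span vertical by blast
  qed
  then obtain v where "v \<in> span {u, w}" "v \<noteq> 0" "v$1 = 0" "v$2 = 0"
    by blast
  moreover from this have "e3 = (1 / v$3) *\<^sub>R v"
    by (auto simp: vec3_eq_iff)
  ultimately show ?thesis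
    by (metis span_mul)
qed

lemma extends_CR_square:
  assumes "CR1 p Jp" "extends_CR J p Jp" "X \<in> p"
  shows "J X \<in> p" "J (J X) = - X"
  using assms by (auto simp: CR1_def extends_CR_def)

lemma CR1_span_pair:
  fixes J :: "real^3 \<Rightarrow> real^3"
  assumes lin: "linear J" and CR: "CR1 p Jp" "extends_CR J p Jp"
  obtains u where "u \<noteq> 0" "J (J u) = - u" "p = span {u, J u}"
proof -
  have "subspace p" "dim p = 2"
    using CR(1) by (simp_all add: CR1_def)
  then have "\<not> p \<subseteq> {0}"
    by (metis dim_eq_0 zero_neq_numeral)
  then obtain u where u: "u \<in> p" "u \<noteq> 0"
    by blast
  have Ju: "J u \<in> p" "J (J u) = - u"
    using extends_CR_square[OF CR u(1)] by auto
  have indep: "a = 0 \<and> b = 0" if "a *\<^sub>R u + b *\<^sub>R J u = 0" for a b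
    using complex_structure_independent[OF lin Ju(2) u(2) that] .
  have "u \<notin> span {J u}"
    using indep[of 1] by (auto simp: span_singleton) (metis add.right_inverse scaleR_minus_left)
  moreover have "J u \<noteq> 0"
    using indep[of 0 1] by auto
  ultimately have "independent {u, J u}" "u \<noteq> J u"
    by (auto simp: independent_insert span_base)
  then have "p \<subseteq> span {u, J u}"
    using u(1) Ju(1) \<open>dim p = 2\<close> by (intro card_ge_dim_independent) auto
  moreover have "span {u, J u} \<subseteq> p"
    using u(1) Ju(1) \<open>subspace p\<close> by (simp add: span_minimal)
  ultimately show ?thesis
    using that u(2) Ju(2) by blast
qed

lemma zero_torsion_centre:
  assumes "linear J" "zero_torsion J"
  shows "heis_form (J e3) (J y) *\<^sub>R e3 = heis_form (J e3) y *\<^sub>R J e3"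
proof -
  have "hbr (J e3) (J y) - hbr e3 y - J (hbr (J e3) y) - J (hbr e3 (J y)) = 0"
    using assms(2) by (simp add: zero_torsion_def)
  then show ?thesis
    using assms(1) by (simp add: hbr_eq linear_scale linear_0)
qed

lemma zero_torsion_centre_eigenvector:
  assumes lin: "linear J" and "zero_torsion J" "J (J u) = - u" "heis_form u (J u) \<noteq> 0"
  shows "J e3 = (J e3)$3 *\<^sub>R e3"
proof -
  define z where "z = J e3"
  have "heis_form z (J u) *\<^sub>R e3 = heis_form z u *\<^sub>R z"
       "heis_form z (- u) *\<^sub>R e3 = heis_form z (J u) *\<^sub>R z"
    using zero_torsion_centre[OF lin \<open>zero_torsion J\<close>, of u]
      zero_torsion_centre[OF lin \<open>zero_torsion J\<close>, of "J u"] \<open>J (J u) = - u\<close>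
    by (simp_all add: z_def)
  then have horizontal: "heis_form z u * z$1 = 0" "heis_form z u * z$2 = 0"
      "heis_form z (J u) * z$1 = 0" "heis_form z (J u) * z$2 = 0"
    by (simp_all add: vec3_eq_iff)
  have "z$1 = 0 \<and> z$2 = 0"
  proof (rule ccontr)
    assume "\<not> (z$1 = 0 \<and> z$2 = 0)"
    with horizontal have "heis_form z u = 0" "heis_form z (J u) = 0"
      by auto
    with heis_form_nondegenerate[OF \<open>heis_form u (J u) \<noteq> 0\<close>] \<open>\<not> (z$1 = 0 \<and> z$2 = 0)\<close>
    show False
      by blast
  qed
  then show ?thesis
    by (simp add: z_def[symmetric] vec3_eq_iff)
qed

lemma equivalent_M1I:
  assumes lin: "linear J" and "J (J u) = - u" "heis_form u (J u) \<noteq> 0" "J e3 = c *\<^sub>R e3"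
  shows "equivalent J (\<lambda>v. M1 c *v v)"
proof (rule equivalentI)
  show "heis_aut (heis_frame u (J u))"
    using assms(3) by (rule heis_aut_heis_frame)
  show "J (heis_frame u (J u) x) = heis_frame u (J u) (M1 c *v x)" for x
    using assms by (simp add: heis_frame_def hbr_eq M1_mult linear_add linear_scale algebra_simps)
qed

lemma complex_structure_e3_horizontal:
  assumes lin: "linear J" and "J (J e3) = - e3"
  shows "(J e3)$1 \<noteq> 0 \<or> (J e3)$2 \<noteq> 0"
proof (rule ccontr)
  assume "\<not> ((J e3)$1 \<noteq> 0 \<or> (J e3)$2 \<noteq> 0)"
  then have "(- (J e3)$3) *\<^sub>R e3 + 1 *\<^sub>R J e3 = 0"
    by (simp add: vec3_eq_iff)
  from complex_structure_independent[OF lin \<open>J (J e3) = - e3\<close> e3_nonzero this]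
  show False
    by simp
qed

definition horizontal_perp :: "real^3 \<Rightarrow> real^3" where
  "horizontal_perp f = vector [- f$2, f$1, 0]"

lemma heis_form_horizontal_perp_pos:
  assumes "f$1 \<noteq> 0 \<or> f$2 \<noteq> 0"
  shows "heis_form f (horizontal_perp f) > 0"
  using assms by (simp add: horizontal_perp_def heis_form_def sum_squares_gt_zero_iff)

lemma not_zero_torsion_if_e3_complex:
  assumes lin: "linear J" and "J (J e3) = - e3"
  shows "\<not> zero_torsion J"
proof
  assume "zero_torsion J"
  define f where "f = J e3"
  define g where "g = horizontal_perp f"
  have "f$1 \<noteq> 0 \<or> f$2 \<noteq> 0"
    unfolding f_def using complex_structure_e3_horizontal[OF assms] .
  then have "heis_form f g > 0"
    unfolding g_def by (rule heis_form_horizontal_perp_pos)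
  moreover have "heis_form f (J g) *\<^sub>R e3 = heis_form f g *\<^sub>R f"
    using zero_torsion_centre[OF lin \<open>zero_torsion J\<close>] by (simp add: f_def)
  then have "heis_form f g * f$1 = 0" "heis_form f g * f$2 = 0"
    by (simp_all add: vec3_eq_iff)
  ultimately show False
    using \<open>f$1 \<noteq> 0 \<or> f$2 \<noteq> 0\<close> by auto
qed

lemma equivalent_M2I:
  assumes lin: "linear J" and "J (J e3) = - e3"
  shows "\<exists>t. equivalent J (\<lambda>v. M2 t *v v)"
proof -
  define f where "f = J e3"
  define g where "g = horizontal_perp f"
  have "f$1 \<noteq> 0 \<or> f$2 \<noteq> 0"
    unfolding f_def using complex_structure_e3_horizontal[OF assms] .
  then have "heis_form f g > 0"
    unfolding g_def by (rule heis_form_horizontal_perp_pos)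
  then have gf: "heis_form g f \<noteq> 0"
    by (simp add: heis_form_def mult.commute)
  obtain x where "J g = heis_frame g f x"
    using heis_aut_heis_frame[OF gf] by (metis bij_pointE heis_aut_def)
  then have "J g = x$1 *\<^sub>R g + x$2 *\<^sub>R f + (x$3 * heis_form g f) *\<^sub>R e3"
    by (simp add: heis_frame_def hbr_eq)
  moreover have "J f = - e3"
    using \<open>J (J e3) = - e3\<close> by (simp add: f_def)
  \<comment> \<open>J is a complex structure on span {e3, f}, so J - x$1 is invertible there\<close>
  ultimately obtain c1 c2 where v: "J (g + c1 *\<^sub>R e3 + c2 *\<^sub>R f) = x$1 *\<^sub>R (g + c1 *\<^sub>R e3 + c2 *\<^sub>R f)"
    using complex_structure_eigenvector[OF lin f_def[symmetric]] by blast
  define a where "a = (1 / heis_form g f) *\<^sub>R (g + c1 *\<^sub>R e3 + c2 *\<^sub>R f)"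
  have Ja: "J a = x$1 *\<^sub>R a"
    using v lin by (simp add: a_def linear_scale)
  have af: "heis_form a f = 1"
    using gf by (simp add: a_def)
  have "equivalent J (\<lambda>v. M2 (x$1) *v v)"
  proof (rule equivalentI)
    show "heis_aut (heis_frame a f)"
      using af by (simp add: heis_aut_heis_frame)
    show "J (heis_frame a f y) = heis_frame a f (M2 (x$1) *v y)" for y
      using lin Ja af \<open>J f = - e3\<close>
      by (simp add: heis_frame_def hbr_eq M2_mult linear_add linear_scale f_def[symmetric] algebra_simps)
  qed
  then show ?thesis ..
qed

lemma equivalent_M1_unique:
  assumes "equivalent J (\<lambda>v. M1 c *v v)" "equivalent J (\<lambda>v. M1 c' *v v)"
  shows "c = c'"
  using equivalent_eigenvalue_iff[OF assms(1), of c] equivalent_eigenvalue_iff[OF assms(2), of c]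
  by (simp add: M1_eigenvalue_iff)

lemma equivalent_M2_unique:
  assumes "equivalent J (\<lambda>v. M2 t *v v)" "equivalent J (\<lambda>v. M2 t' *v v)"
  shows "t = t'"
  using equivalent_eigenvalue_iff[OF assms(1), of t] equivalent_eigenvalue_iff[OF assms(2), of t]
  by (simp add: M2_eigenvalue_iff)

lemma CR1_nonabelian_equivalent_M1:
  assumes lin: "linear J" and "zero_torsion J"
    and CR: "CR1 p Jp" "extends_CR J p Jp" and "\<not> abelian_sub p"
  shows "\<exists>c. equivalent J (\<lambda>v. M1 c *v v)"
proof -
  obtain u where u: "u \<noteq> 0" "J (J u) = - u" "p = span {u, J u}"
    using CR1_span_pair[OF lin CR] .
  with \<open>\<not> abelian_sub p\<close> have "heis_form u (J u) \<noteq> 0"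
    by (simp add: abelian_sub_span_pair_iff)
  with lin \<open>zero_torsion J\<close> u(2) show ?thesis
    by (metis equivalent_M1I zero_torsion_centre_eigenvector)
qed

lemma CR1_abelian_e3_complex:
  assumes lin: "linear J" and CR: "CR1 p Jp" "extends_CR J p Jp" and "abelian_sub p"
  shows "J (J e3) = - e3"
proof -
  obtain u where u: "u \<noteq> 0" "J (J u) = - u" "p = span {u, J u}"
    using CR1_span_pair[OF lin CR] .
  with \<open>abelian_sub p\<close> have "heis_form u (J u) = 0"
    by (simp add: abelian_sub_span_pair_iff)
  then have "e3 \<in> p"
    using complex_structure_independent[OF lin u(2,1)] e3_in_span_pair u(3) by blast
  then show ?thesis
    using extends_CR_square[OF CR] by blast
qed

theorem lemma4:
  shows "(\<forall>J :: real^3 \<Rightarrow> real^3. linear J \<and> zero_torsion J \<and>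
            (\<exists>p Jp. CR1 p Jp \<and> extends_CR J p Jp \<and> \<not> abelian_sub p)
          \<longrightarrow> (\<exists>!c::real. equivalent J (\<lambda>v. M1 c *v v)))
       \<and> (\<forall>J :: real^3 \<Rightarrow> real^3. linear J \<and>
            (\<exists>p Jp. CR1 p Jp \<and> extends_CR J p Jp \<and> abelian_sub p)
          \<longrightarrow> (\<exists>!t::real. equivalent J (\<lambda>v. M2 t *v v)) \<and> \<not> zero_torsion J)"
proof (intro conjI allI impI)
  fix J :: "real^3 \<Rightarrow> real^3"
  assume "linear J \<and> zero_torsion J \<and> (\<exists>p Jp. CR1 p Jp \<and> extends_CR J p Jp \<and> \<not> abelian_sub p)"
  then have "\<exists>c. equivalent J (\<lambda>v. M1 c *v v)"
    using CR1_nonabelian_equivalent_M1 by blast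
  then show "\<exists>!c. equivalent J (\<lambda>v. M1 c *v v)"
    using equivalent_M1_unique by blast
next
  fix J :: "real^3 \<Rightarrow> real^3"
  assume "linear J \<and> (\<exists>p Jp. CR1 p Jp \<and> extends_CR J p Jp \<and> abelian_sub p)"
  then have lin: "linear J" and "J (J e3) = - e3"
    using CR1_abelian_e3_complex by blast+
  then show "\<exists>!t. equivalent J (\<lambda>v. M2 t *v v)"
    using equivalent_M2I equivalent_M2_unique by blast
  show "\<not> zero_torsion J"
    using not_zero_torsion_if_e3_complex[OF lin \<open>J (J e3) = - e3\<close>] .
qed

end
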